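(* Consider the problem of steering $\dot x=Ax+u b$, $|u(t)|\le1$, from $(0,0,0)$ to $(\gamma,0,\gamma)$ in minimum time, where $$A=\begin{pmatrix}0&1&0\\-1&0&1\\0&0&0\end{pmatrix},\qquad b=(0,0,1)^T,\qquad \gamma>0.$$ (i) If $2(\rho-1)\pi<\gamma<2\rho\pi$ for some integer $\rho\ge1$, the unique optimal control has exactly $2\rho$ switchings and is $$u(t)=(-1)^{j-1},\quad t_{j-1}<t<t_j,\quad j=1,\dots,2\rho+1,$$ with $t_0=0$, where the interval lengths $\tau_j=t_j-t_{j-1}$ satisfy: $\tau_1=\tau_{2\rho+1}=\tau$, where $\tau\in(0,\pi)$ is the unique solution in $(0,\pi)$ of $$\frac{2\tau+2(\rho-1)\pi-\gamma}{2\rho-1}=2\tan^{-1}\!\Big(\frac{\sin\tau}{2\rho-\cos\tau}\Big)$$ (with $\tan^{-1}$ taking values in $(-\pi/2,\pi/2)$); $$\tau_{2k}=\frac{2\tau+2(\rho-1)\pi-\gamma}{2\rho-1},\quad k=1,\dots,\rho;\qquad \tau_{2k+1}=2\pi-\tau_{2k+2}=\frac{2\rho\pi-2\tau+\gamma}{2\rho-1},\quad k=1,\dots,\rho-1.$$ The minimum transfer time is $$t_{2\rho+1}=\frac{4\rho[\tau+(\rho-1)\pi]-\gamma}{2\rho-1}.$$ (ii) If $\gamma=2\rho\pi$ for some integer $\rho\ge1$, the optimal control is $u(t)\equiv1$ and the minimum time is $2\rho\pi$.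
   Context: Controls are measurable functions with values in $[-1,1]$; the terminal time is free. *)

theory Defs
  imports "HOL-Analysis.Analysis"
begin

definition Amat :: "real^3^3" where
  "Amat = vector [vector [0, 1, 0], vector [-1, 0, 1], vector [0, 0, 0]]"

definition bvec :: "real^3" where
  "bvec = vector [0, 0, 1]"

definition admissible :: "(real \<Rightarrow> real) \<Rightarrow> bool" where
  "admissible u \<longleftrightarrow> u \<in> borel_measurable lebesgue \<and> (\<forall>t. \<bar>u t\<bar> \<le> 1)"

text \<open>u steers x0 to x1 in time T: there is an (absolutely continuous, Caratheodory)
  solution of x' = A x + u b on [0,T] with x(0)=x0, x(T)=x1.\<close>
definition steers :: "(real \<Rightarrow> real) \<Rightarrow> real \<Rightarrow> real^3 \<Rightarrow> real^3 \<Rightarrow> bool" where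
  "steers u T x0 x1 \<longleftrightarrow> 0 \<le> T \<and> (\<exists>x :: real \<Rightarrow> real^3. x 0 = x0 \<and> x T = x1 \<and>
     (\<forall>t\<in>{0..T}. ((\<lambda>s. Amat *v x s + u s *\<^sub>R bvec) has_integral (x t - x0)) {0..t}))"

definition reachable_in :: "real \<Rightarrow> real^3 \<Rightarrow> real^3 \<Rightarrow> bool" where
  "reachable_in T x0 x1 \<longleftrightarrow> (\<exists>u. admissible u \<and> steers u T x0 x1)"

definition min_time :: "real \<Rightarrow> real^3 \<Rightarrow> real^3 \<Rightarrow> bool" where
  "min_time T x0 x1 \<longleftrightarrow> reachable_in T x0 x1 \<and> (\<forall>T'. 0 \<le> T' \<and> T' < T \<longrightarrow> \<not> reachable_in T' x0 x1)"

definition sw_len :: "nat \<Rightarrow> real \<Rightarrow> real \<Rightarrow> nat \<Rightarrow> real" where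
  "sw_len \<rho> \<gamma> \<tau> j =
     (if j = 1 \<or> j = 2*\<rho>+1 then \<tau>
      else if even j then (2*\<tau> + 2*(real \<rho> - 1)*pi - \<gamma>) / (2*real \<rho> - 1)
      else (2*real \<rho>*pi - 2*\<tau> + \<gamma>) / (2*real \<rho> - 1))"

definition sw_time :: "nat \<Rightarrow> real \<Rightarrow> real \<Rightarrow> nat \<Rightarrow> real" where
  "sw_time \<rho> \<gamma> \<tau> j = (\<Sum>i\<in>{1..j}. sw_len \<rho> \<gamma> \<tau> i)"

end

theory Submission
  imports Defs
begin

(* In coordinates a trajectory from the origin is x3 = int_0^t u together with the
   forced oscillator x1' = x2, x2' = x3 - x1.  Integrating by parts shows that an admissible u
   reaches (gamma, 0, gamma) at time T iff  int_0^T u = gamma  and  int_0^T u cos = int_0^T u sin = 0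
   (steers_iff_moments).  Consequently, for any phi = c0 + c1 cos + c2 sin the pairing
   int_0^T u phi equals c0 * gamma for EVERY control reaching the target.  Since u phi <= |phi|,
   a control equal to sgn phi on [0, T0] that reaches the target certifies that T0 is the
   minimum time and that optimal controls equal sgn phi a.e. (optimality_certificate).

   In the locale switching_solution, for that tau, the bang-bang control with the stated
   switching pattern equals sgn phi for phi(s) = cos eta - cos (s - tau - eta), where eta is
   half the even interval length, and it has the right moments; this gives part (i) (generic_case).  For gamma = 2 rho pi the
   certificate is phi = 1, giving part (ii) (resonant_case). *)

section \<open>Integrals of bounded measurable controls\<close>

text \<open>Lebesgue measure on the line is sigma-finite; this is what makes Fubini's theorem
  available on the product of two copies of it (used for integration by parts below).\<close>
lemma lebesgue_sigma_finite: "sigma_finite_measure (lebesgue :: real measure)"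
proof
  obtain A :: "real set set" where "countable A" "A \<subseteq> sets lborel" "\<Union>A = space lborel"
      "\<forall>a\<in>A. emeasure lborel a \<noteq> \<infinity>"
    using lborel.sigma_finite_countable by metis
  then show "\<exists>A. countable A \<and> A \<subseteq> sets (lebesgue :: real measure) \<and> \<Union> A = space lebesgue \<and>
      (\<forall>a\<in>A. emeasure lebesgue a \<noteq> \<infinity>)"
    by (intro exI[of _ A]) auto
qed

interpretation lebesgue_pair: pair_sigma_finite "lebesgue :: real measure" "lebesgue :: real measure"
  by (simp add: lebesgue_sigma_finite pair_sigma_finite.intro)

lemma continuous_lebesgue_measurable:
  "continuous_on UNIV (f :: real \<Rightarrow> real) \<Longrightarrow> f \<in> borel_measurable lebesgue"
  by (simp add: borel_measurable_continuous_onI measurable_completion)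

lemma set_integrable_bounded_Icc:
  fixes f :: "real \<Rightarrow> real"
  assumes "f \<in> borel_measurable lebesgue" "\<And>x. x \<in> {a..b} \<Longrightarrow> \<bar>f x\<bar> \<le> B"
  shows "set_integrable lebesgue {a..b} f"
  unfolding set_integrable_def
  by (rule integrableI_bounded_set_indicator[where B=B])
     (use assms in \<open>auto simp: emeasure_lborel_Icc_eq\<close>)

lemma admissible_weighted_set_integrable:
  fixes h :: "real \<Rightarrow> real"
  assumes v: "admissible v" and h: "continuous_on UNIV h"
  shows "set_integrable lebesgue {a..b} (\<lambda>s. v s * h s)"
proof -
  have vm: "v \<in> borel_measurable lebesgue" and vb: "\<And>s. \<bar>v s\<bar> \<le> 1"
    using v by (auto simp: admissible_def)
  obtain B where B: "\<And>x. x \<in> {a..b} \<Longrightarrow> norm (h x) \<le> B"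
    using continuous_on_compact_bound[OF compact_Icc continuous_on_subset[OF h]] by blast
  show ?thesis
  proof (rule set_integrable_bounded_Icc[where B=B])
    show "(\<lambda>s. v s * h s) \<in> borel_measurable lebesgue"
      using vm continuous_lebesgue_measurable[OF h] by (rule borel_measurable_times)
    fix x assume "x \<in> {a..b}"
    then have "\<bar>v x\<bar> * \<bar>h x\<bar> \<le> 1 * B" using B vb[of x] by (intro mult_mono) auto
    then show "\<bar>v x * h x\<bar> \<le> B" by (simp add: abs_mult)
  qed
qed

lemma admissible_weighted_integrable:
  fixes h :: "real \<Rightarrow> real"
  assumes "admissible v" and "continuous_on UNIV h"
  shows "(\<lambda>s. v s * h s) integrable_on {a..b}"
    and "(LINT s:{a..b}|lebesgue. v s * h s) = integral {a..b} (\<lambda>s. v s * h s)"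
  using set_lebesgue_integral_eq_integral[OF admissible_weighted_set_integrable[OF assms]] by auto

lemma admissible_integrable: "admissible v \<Longrightarrow> v integrable_on {a..b}"
  using admissible_weighted_integrable(1)[of v "\<lambda>_. 1"] by simp

lemma integral_by_primitive:
  fixes G g :: "real \<Rightarrow> real"
  assumes "a \<le> b" "\<And>x. (G has_real_derivative g x) (at x)"
  shows "integral {a..b} g = G b - G a"
  by (intro integral_unique fundamental_theorem_of_calculus assms)
     (auto simp: has_real_derivative_iff_has_vector_derivative[symmetric]
           intro: DERIV_subset[OF assms(2)])

text \<open>The kernel \<open>v(s) h(r)\<close> restricted to the triangle \<open>0 \<le> s \<le> r \<le> T\<close> is integrable on
  the plane; this licenses exchanging the order of integration below.\<close>
lemma triangle_kernel_integrable:
  fixes h :: "real \<Rightarrow> real"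
  assumes v: "admissible v" and h: "continuous_on UNIV h"
  shows "integrable (lebesgue \<Otimes>\<^sub>M lebesgue)
           (\<lambda>(s, r). if 0 \<le> s \<and> s \<le> r \<and> r \<le> T then v s * h r else 0)"
    (is "integrable _ ?F")
proof -
  have vm: "v \<in> borel_measurable lebesgue" and vb: "\<And>s. \<bar>v s\<bar> \<le> 1"
    using v by (auto simp: admissible_def)
  obtain B where B: "\<And>x. x \<in> {0..T} \<Longrightarrow> norm (h x) \<le> B"
    using continuous_on_compact_bound[OF compact_Icc continuous_on_subset[OF h]] by blast
  have id_meas: "(\<lambda>x::real. x) \<in> borel_measurable lebesgue"
    by (rule measurable_completion) simp
  have fst_meas: "(\<lambda>p::real\<times>real. fst p) \<in> borel_measurable (lebesgue \<Otimes>\<^sub>M lebesgue)"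
   and snd_meas: "(\<lambda>p::real\<times>real. snd p) \<in> borel_measurable (lebesgue \<Otimes>\<^sub>M lebesgue)"
    by (rule measurable_compose[OF measurable_fst id_meas] measurable_compose[OF measurable_snd id_meas])+
  have prod_meas: "(\<lambda>p::real\<times>real. v (fst p) * h (snd p)) \<in> borel_measurable (lebesgue \<Otimes>\<^sub>M lebesgue)"
    by (intro borel_measurable_times measurable_compose[OF measurable_fst vm]
        measurable_compose[OF measurable_snd continuous_lebesgue_measurable[OF h]])
  have "?F = (\<lambda>p. if 0 \<le> fst p \<and> fst p \<le> snd p \<and> snd p \<le> T then v (fst p) * h (snd p) else 0)"
    by (auto simp: fun_eq_iff)
  then have F_meas: "?F \<in> borel_measurable (lebesgue \<Otimes>\<^sub>M lebesgue)"
    using fst_meas snd_meas prod_meas by simp measurable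
  show ?thesis
  proof (rule integrableI_bounded_set[where A="{0..T} \<times> {0..T}" and B=B])
    show "emeasure (lebesgue \<Otimes>\<^sub>M lebesgue) ({0..T} \<times> {0..T::real}) < \<infinity>"
      by (subst sigma_finite_measure.emeasure_pair_measure_Times[OF lebesgue_sigma_finite])
         (auto simp: emeasure_lborel_Icc_eq ennreal_mult_less_top)
    have "\<bar>v s * h r\<bar> \<le> B" if "r \<in> {0..T}" for s r
    proof -
      have "\<bar>v s\<bar> * \<bar>h r\<bar> \<le> 1 * B" using B[OF that] vb[of s] by (intro mult_mono) auto
      then show ?thesis by (simp add: abs_mult)
    qed
    then show "AE x in lebesgue \<Otimes>\<^sub>M lebesgue. x \<in> {0..T} \<times> {0..T} \<longrightarrow> norm (?F x) \<le> B"
      using B[THEN order_trans[OF norm_ge_zero]] by (intro AE_I2) (auto simp: abs_mult)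
    show "AE x in lebesgue \<Otimes>\<^sub>M lebesgue. x \<notin> {0..T} \<times> {0..T} \<longrightarrow> ?F x = 0"
      by (rule AE_I2) (auto split: if_splits)
  qed (use F_meas in auto)
qed

text \<open>Since \<open>v\<close> is merely measurable, this is proved
  by Fubini on the triangle \<open>0 \<le> s \<le> r \<le> T\<close> rather than by the product rule.\<close>
lemma admissible_integration_by_parts:
  fixes g g' :: "real \<Rightarrow> real"
  assumes v: "admissible v" and T: "0 \<le> T"
    and gd: "\<And>x. (g has_real_derivative g' x) (at x)" and gc: "continuous_on UNIV g'"
  shows "integral {0..T} (\<lambda>s. v s * g s) =
           g T * integral {0..T} v - integral {0..T} (\<lambda>r. g' r * integral {0..r} v)"
proof -
  have g_cont: "continuous_on UNIV g"
    using gd by (meson DERIV_continuous continuous_at_imp_continuous_on)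
  define F where "F = (\<lambda>(s::real) (r::real). if 0 \<le> s \<and> s \<le> r \<and> r \<le> T then v s * g' r else 0)"
  have F_int: "integrable (lebesgue \<Otimes>\<^sub>M lebesgue) (case_prod F)"
    unfolding F_def using triangle_kernel_integrable[OF v gc] by (simp add: case_prod_beta')
  text \<open>Integrating first in \<open>s\<close> gives the right-hand side, first in \<open>r\<close> the left-hand side.\<close>
  have inner_s: "(\<integral>s. F s r \<partial>lebesgue) = indicator {0..T} r * (g' r * integral {0..r} v)" for r
  proof -
    have "(\<lambda>s. F s r) = (\<lambda>s. indicator {0..T} r * (g' r * (indicator {0..r} s *\<^sub>R v s)))"
      by (auto simp: F_def fun_eq_iff indicator_def)
    then show ?thesis
      using admissible_weighted_integrable(2)[OF v, of "\<lambda>_. 1" 0 r]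
      by (simp add: set_lebesgue_integral_def)
  qed
  have inner_r: "(\<integral>r. F s r \<partial>lebesgue) = indicator {0..T} s * (v s * (g T - g s))" for s
  proof -
    have "(\<lambda>r. F s r) = (\<lambda>r. indicator {0..T} s * (v s * (indicator {s..T} r *\<^sub>R g' r)))"
      by (auto simp: F_def fun_eq_iff indicator_def)
    then have "(\<integral>r. F s r \<partial>lebesgue) = indicator {0..T} s * (v s * (LINT r:{s..T}|lebesgue. g' r))"
      by (simp add: set_lebesgue_integral_def)
    also have "(LINT r:{s..T}|lebesgue. g' r) = integral {s..T} g'"
      using admissible_weighted_integrable(2)[of "\<lambda>_. 1" g' s T] gc by (simp add: admissible_def)
    moreover have "s \<in> {0..T} \<Longrightarrow> integral {s..T} g' = g T - g s"
      by (rule integral_by_primitive[OF _ gd]) simp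
    ultimately show ?thesis by (auto simp: indicator_def)
  qed
  have lhs: "(\<integral>r. indicator {0..T} r * (g' r * integral {0..r} v) \<partial>lebesgue) =
               integral {0..T} (\<lambda>r. g' r * integral {0..r} v)"
  proof -
    have "continuous_on {0..T} (\<lambda>r. g' r * integral {0..r} v)"
      by (intro continuous_intros indefinite_integral_continuous_1 admissible_integrable[OF v]
          continuous_on_subset[OF gc]) auto
    from set_lebesgue_integral_eq_integral(2)[OF absolutely_integrable_continuous_real[OF this]]
    show ?thesis by (simp add: set_lebesgue_integral_def)
  qed
  have rhs: "(\<integral>s. indicator {0..T} s * (v s * (g T - g s)) \<partial>lebesgue) =
               integral {0..T} (\<lambda>s. v s * (g T - g s))"
    using admissible_weighted_integrable(2)[OF v, of "\<lambda>s. g T - g s" 0 T] g_cont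
    by (simp add: set_lebesgue_integral_def continuous_intros)
  have "integral {0..T} (\<lambda>r. g' r * integral {0..r} v) = integral {0..T} (\<lambda>s. v s * (g T - g s))"
    using lebesgue_pair.Fubini_integral[OF F_int] inner_s inner_r lhs rhs by simp
  also have "\<dots> = integral {0..T} (\<lambda>s. g T * v s - v s * g s)"
    by (simp add: algebra_simps)
  also have "\<dots> = g T * integral {0..T} v - integral {0..T} (\<lambda>s. v s * g s)"
    using integral_diff[OF integrable_on_mult_right[OF admissible_integrable[OF v]]
        admissible_weighted_integrable(1)[OF v g_cont]] by simp
  finally show ?thesis by simp
qed

section \<open>Reachability of \<open>(\<gamma>,0,\<gamma>)\<close> in terms of three moments of the control\<close>

lemma Amat_bvec_components:
  fixes y :: "real^3"
  shows "(Amat *v y) $ 1 = y $ 2" "(Amat *v y) $ 2 = y $ 3 - y $ 1" "(Amat *v y) $ 3 = 0"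
    "bvec $ 1 = 0" "bvec $ 2 = 0" "bvec $ 3 = 1"
  by (simp_all add: Amat_def bvec_def matrix_vector_mult_def sum_3)

lemma primitive_continuous:
  fixes y y' :: "real \<Rightarrow> real"
  assumes T: "0 \<le> T" and y: "\<And>t. t \<in> {0..T} \<Longrightarrow> (y' has_integral y t) {0..t}"
  shows "continuous_on {0..T} y"
proof -
  have "continuous_on {0..T} (\<lambda>t. integral {0..t} y')"
    using y[of T] T by (intro indefinite_integral_continuous_1) (auto simp: integrable_on_def)
  then show ?thesis by (rule continuous_on_eq) (use y in \<open>auto intro: integral_unique\<close>)
qed

lemma primitive_derivative:
  fixes y y' :: "real \<Rightarrow> real"
  assumes y: "\<And>t. t \<in> {0..T} \<Longrightarrow> (y' has_integral y t) {0..t}"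
    and y': "continuous_on {0..T} y'" and t: "t \<in> {0..T}"
  shows "(y has_real_derivative y' t) (at t within {0..T})"
  unfolding has_real_derivative_iff_has_vector_derivative
  by (rule has_vector_derivative_transform[OF t _ integral_has_vector_derivative[OF y' t]])
     (use y in \<open>auto intro: integral_unique[symmetric]\<close>)

lemma steers_state_equations:
  assumes "steers v T (vector [0,0,0]) p"
  obtains x1 x2 where "0 \<le> T" "v integrable_on {0..T}" "integral {0..T} v = p $ 3"
    "x1 0 = 0" "x2 0 = 0" "x1 T = p $ 1" "x2 T = p $ 2"
    "\<And>t. t \<in> {0..T} \<Longrightarrow> (x1 has_real_derivative x2 t) (at t within {0..T})"
    "\<And>t. t \<in> {0..T} \<Longrightarrow> (x2 has_real_derivative integral {0..t} v - x1 t) (at t within {0..T})"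
proof -
  obtain x :: "real \<Rightarrow> real^3" where T: "0 \<le> T" and x0: "x 0 = vector [0,0,0]" and xT: "x T = p"
    and hi: "\<And>t. t \<in> {0..T} \<Longrightarrow> ((\<lambda>s. Amat *v x s + v s *\<^sub>R bvec) has_integral (x t - vector [0,0,0])) {0..t}"
    using assms unfolding steers_def by blast
  have x0': "x 0 = 0" using x0 by (simp add: vec_eq_iff forall_3)
  have coord: "((\<lambda>s. (Amat *v x s + v s *\<^sub>R bvec) $ i) has_integral (x t $ i)) {0..t}"
    if "t \<in> {0..T}" for t i
    using has_integral_linear[OF hi[OF that] bounded_linear_vec_nth[of i]] x0 x0' by (simp add: o_def)
  define x1 where "x1 = (\<lambda>t. x t $ 1)"
  define x2 where "x2 = (\<lambda>t. x t $ 2)"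
  have h1: "(x2 has_integral x1 t) {0..t}" if "t \<in> {0..T}" for t
    using coord[OF that, of 1] by (simp add: Amat_bvec_components x1_def x2_def)
  have h3: "(v has_integral x t $ 3) {0..t}" if "t \<in> {0..T}" for t
    using coord[OF that, of 3] by (simp add: Amat_bvec_components)
  have X: "integral {0..t} v = x t $ 3" if "t \<in> {0..T}" for t
    using h3[OF that] by (rule integral_unique)
  have h2: "((\<lambda>s. integral {0..s} v - x1 s) has_integral x2 t) {0..t}" if "t \<in> {0..T}" for t
  proof -
    have "((\<lambda>s. x s $ 3 - x1 s) has_integral x2 t) {0..t}"
      using coord[OF that, of 2] by (simp add: Amat_bvec_components x1_def x2_def)
    moreover have "x s $ 3 = integral {0..s} v" if "s \<in> {0..t}" for s
      using X \<open>t \<in> {0..T}\<close> that by auto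
    ultimately show ?thesis by (subst has_integral_cong[where g="\<lambda>s. x s $ 3 - x1 s"]) auto
  qed
  have vi: "v integrable_on {0..T}" using h3[of T] T by (auto simp: integrable_on_def)
  have c1: "continuous_on {0..T} x1" by (rule primitive_continuous[OF T h1])
  have c2: "continuous_on {0..T} x2" by (rule primitive_continuous[OF T h2])
  have c3: "continuous_on {0..T} (\<lambda>t. integral {0..t} v)"
    by (rule indefinite_integral_continuous_1[OF vi])
  show thesis
  proof
    show "(x1 has_real_derivative x2 t) (at t within {0..T})" if "t \<in> {0..T}" for t
      by (rule primitive_derivative[OF h1 c2 that])
    show "(x2 has_real_derivative integral {0..t} v - x1 t) (at t within {0..T})" if "t \<in> {0..T}" for t
      by (rule primitive_derivative[OF h2 continuous_on_diff[OF c3 c1] that])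
  qed (use T vi X[of T] x0' xT in \<open>auto simp: x1_def x2_def\<close>)
qed

lemma has_integral_vector3:
  fixes f1 f2 f3 :: "real \<Rightarrow> real"
  assumes "(f1 has_integral a) S" "(f2 has_integral b) S" "(f3 has_integral c) S"
  shows "((\<lambda>s. vector [f1 s, f2 s, f3 s] :: real^3) has_integral vector [a, b, c]) S"
proof -
  have "vector [p, q, r] = p *\<^sub>R axis 1 1 + q *\<^sub>R axis 2 1 + r *\<^sub>R (axis 3 1 :: real^3)" for p q r :: real
    by (simp add: vec_eq_iff forall_3 axis_def)
  then show ?thesis by (simp only:) (intro has_integral_add has_integral_scaleR_left assms)
qed

lemma steers_of_state_equations:
  assumes T: "0 \<le> T" and vi: "v integrable_on {0..T}" and init: "x1 0 = 0" "x2 0 = 0"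
    and d1: "\<And>t. t \<in> {0..T} \<Longrightarrow> (x1 has_real_derivative x2 t) (at t within {0..T})"
    and d2: "\<And>t. t \<in> {0..T} \<Longrightarrow> (x2 has_real_derivative integral {0..t} v - x1 t) (at t within {0..T})"
  shows "steers v T (vector [0,0,0]) (vector [x1 T, x2 T, integral {0..T} v])"
proof -
  define x where "x = (\<lambda>t. vector [x1 t, x2 t, integral {0..t} v] :: real^3)"
  have "((\<lambda>s. Amat *v x s + v s *\<^sub>R bvec) has_integral (x t - vector [0,0,0])) {0..t}"
    if t: "t \<in> {0..T}" for t
  proof -
    have sub: "{0..t} \<subseteq> {0..T}" using t by auto
    have "(x2 has_integral (x1 t - x1 0)) {0..t}"
      using t by (intro fundamental_theorem_of_calculus)
        (auto simp: has_real_derivative_iff_has_vector_derivative[symmetric] intro!: DERIV_subset[OF d1])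
    moreover have "((\<lambda>s. integral {0..s} v - x1 s) has_integral (x2 t - x2 0)) {0..t}"
      using t by (intro fundamental_theorem_of_calculus)
        (auto simp: has_real_derivative_iff_has_vector_derivative[symmetric] intro!: DERIV_subset[OF d2])
    moreover have "(v has_integral integral {0..t} v) {0..t}"
      by (rule integrable_integral[OF integrable_on_subinterval[OF vi sub]])
    moreover have "Amat *v x s + v s *\<^sub>R bvec = vector [x2 s, integral {0..s} v - x1 s, v s]" for s
      by (simp add: vec_eq_iff forall_3 Amat_bvec_components x_def)
    moreover have "x t - vector [0,0,0] = vector [x1 t, x2 t, integral {0..t} v]"
      by (simp add: vec_eq_iff forall_3 x_def)
    ultimately show ?thesis using has_integral_vector3 init by simp
  qed
  moreover have "x 0 = vector [0,0,0]" by (simp add: x_def init)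
  ultimately show ?thesis using T unfolding steers_def by (intro conjI exI[of _ x]) (auto simp: x_def)
qed

lemma trig_moments_by_parts:
  assumes v: "admissible v" and T: "0 \<le> T"
  shows "integral {0..T} (\<lambda>s. v s * cos s) =
           cos T * integral {0..T} v + integral {0..T} (\<lambda>r. integral {0..r} v * sin r)"
    and "integral {0..T} (\<lambda>s. v s * sin s) =
           sin T * integral {0..T} v - integral {0..T} (\<lambda>r. integral {0..r} v * cos r)"
proof -
  have "integral {0..T} (\<lambda>s. v s * cos s) =
          cos T * integral {0..T} v - integral {0..T} (\<lambda>r. - sin r * integral {0..r} v)"
    by (rule admissible_integration_by_parts[OF v T])
       (auto intro!: derivative_eq_intros continuous_intros)
  then show "integral {0..T} (\<lambda>s. v s * cos s) =
           cos T * integral {0..T} v + integral {0..T} (\<lambda>r. integral {0..r} v * sin r)"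
    by (simp add: integral_neg mult.commute)
  show "integral {0..T} (\<lambda>s. v s * sin s) =
           sin T * integral {0..T} v - integral {0..T} (\<lambda>r. integral {0..r} v * cos r)"
    by (subst admissible_integration_by_parts[OF v T])
       (auto intro!: derivative_eq_intros continuous_intros simp: mult.commute)
qed

lemma forced_oscillator_integrals:
  fixes x1 x2 X :: "real \<Rightarrow> real"
  assumes T: "0 \<le> T" and init: "x1 0 = 0" "x2 0 = 0"
    and d1: "\<And>t. t \<in> {0..T} \<Longrightarrow> (x1 has_real_derivative x2 t) (at t within {0..T})"
    and d2: "\<And>t. t \<in> {0..T} \<Longrightarrow> (x2 has_real_derivative X t - x1 t) (at t within {0..T})"
  shows "((\<lambda>t. X t * cos t) has_integral x1 T * sin T + x2 T * cos T) {0..T}"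
    and "((\<lambda>t. X t * sin t) has_integral x2 T * sin T - x1 T * cos T) {0..T}"
proof -
  have "((\<lambda>t. X t * cos t) has_integral
          (\<lambda>t. x1 t * sin t + x2 t * cos t) T - (\<lambda>t. x1 t * sin t + x2 t * cos t) 0) {0..T}"
  proof (rule fundamental_theorem_of_calculus[OF T])
    fix t assume t: "t \<in> {0..T}"
    have "((\<lambda>t. x1 t * sin t + x2 t * cos t) has_real_derivative
          (x2 t * sin t + x1 t * cos t + ((X t - x1 t) * cos t - x2 t * sin t))) (at t within {0..T})"
      using d1[OF t] d2[OF t] by (auto intro!: derivative_eq_intros)
    then show "((\<lambda>t. x1 t * sin t + x2 t * cos t) has_vector_derivative X t * cos t) (at t within {0..T})"
      by (simp add: has_real_derivative_iff_has_vector_derivative algebra_simps)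
  qed
  then show "((\<lambda>t. X t * cos t) has_integral x1 T * sin T + x2 T * cos T) {0..T}"
    using init by simp
  have "((\<lambda>t. X t * sin t) has_integral
          (\<lambda>t. x2 t * sin t - x1 t * cos t) T - (\<lambda>t. x2 t * sin t - x1 t * cos t) 0) {0..T}"
  proof (rule fundamental_theorem_of_calculus[OF T])
    fix t assume t: "t \<in> {0..T}"
    have "((\<lambda>t. x2 t * sin t - x1 t * cos t) has_real_derivative
          ((X t - x1 t) * sin t + x2 t * cos t - (x2 t * cos t - x1 t * sin t))) (at t within {0..T})"
      using d1[OF t] d2[OF t] by (auto intro!: derivative_eq_intros)
    then show "((\<lambda>t. x2 t * sin t - x1 t * cos t) has_vector_derivative X t * sin t) (at t within {0..T})"
      by (simp add: has_real_derivative_iff_has_vector_derivative algebra_simps)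
  qed
  then show "((\<lambda>t. X t * sin t) has_integral x2 T * sin T - x1 T * cos T) {0..T}"
    using init by simp
qed

text \<open>Variation of constants: if \<open>C\<close>, \<open>S\<close> are primitives of \<open>X cos\<close>, \<open>X sin\<close>, then
  \<open>x\<^sub>1 = sin t\<cdot>C - cos t\<cdot>S\<close>, \<open>x\<^sub>2 = cos t\<cdot>C + sin t\<cdot>S\<close> solve \<open>x\<^sub>1' = x\<^sub>2\<close>, \<open>x\<^sub>2' = X - x\<^sub>1\<close>.\<close>
lemma forced_oscillator_solution:
  fixes X C S :: "real \<Rightarrow> real"
  assumes dC: "(C has_real_derivative X t * cos t) (at t within A)"
    and dS: "(S has_real_derivative X t * sin t) (at t within A)"
  shows "((\<lambda>t. sin t * C t - cos t * S t) has_real_derivative cos t * C t + sin t * S t)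
           (at t within A)"
    and "((\<lambda>t. cos t * C t + sin t * S t) has_real_derivative X t - (sin t * C t - cos t * S t))
           (at t within A)"
proof -
  have pyth: "X t * (cos t * cos t) + X t * (sin t * sin t) = X t"
    using sin_cos_squared_add[of t] by (simp add: power2_eq_square flip: distrib_left)
  show "((\<lambda>t. sin t * C t - cos t * S t) has_real_derivative cos t * C t + sin t * S t)
           (at t within A)"
    using dC dS by (auto intro!: derivative_eq_intros simp: algebra_simps)
  show "((\<lambda>t. cos t * C t + sin t * S t) has_real_derivative X t - (sin t * C t - cos t * S t))
           (at t within A)"
    using dC dS pyth by (auto intro!: derivative_eq_intros simp: algebra_simps)
qed

lemma steers_iff_moments:
  assumes v: "admissible v"
  shows "steers v T (vector [0,0,0]) (vector [\<gamma>,0,\<gamma>]) \<longleftrightarrow>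
           0 \<le> T \<and> integral {0..T} v = \<gamma> \<and>
           integral {0..T} (\<lambda>s. v s * cos s) = 0 \<and> integral {0..T} (\<lambda>s. v s * sin s) = 0"
proof
  assume "steers v T (vector [0,0,0]) (vector [\<gamma>,0,\<gamma>])"
  then obtain x1 x2 where T: "0 \<le> T" and m0: "integral {0..T} v = \<gamma>"
    and init: "x1 0 = 0" "x2 0 = 0" and final: "x1 T = \<gamma>" "x2 T = 0"
    and d1: "\<And>t. t \<in> {0..T} \<Longrightarrow> (x1 has_real_derivative x2 t) (at t within {0..T})"
    and d2: "\<And>t. t \<in> {0..T} \<Longrightarrow> (x2 has_real_derivative integral {0..t} v - x1 t) (at t within {0..T})"
    by (rule steers_state_equations) simp_all
  note osc = forced_oscillator_integrals[OF T init d1 d2, unfolded final]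
  show "0 \<le> T \<and> integral {0..T} v = \<gamma> \<and>
        integral {0..T} (\<lambda>s. v s * cos s) = 0 \<and> integral {0..T} (\<lambda>s. v s * sin s) = 0"
    using T m0 trig_moments_by_parts[OF v T] integral_unique[OF osc(1)] integral_unique[OF osc(2)]
    by simp
next
  assume "0 \<le> T \<and> integral {0..T} v = \<gamma> \<and>
          integral {0..T} (\<lambda>s. v s * cos s) = 0 \<and> integral {0..T} (\<lambda>s. v s * sin s) = 0"
  then have T: "0 \<le> T" and m0: "integral {0..T} v = \<gamma>"
    and mc: "integral {0..T} (\<lambda>s. v s * cos s) = 0" and ms: "integral {0..T} (\<lambda>s. v s * sin s) = 0"
    by auto
  define X where "X = (\<lambda>t. integral {0..t} v)"
  define C where "C = (\<lambda>t. integral {0..t} (\<lambda>s. X s * cos s))"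
  define S where "S = (\<lambda>t. integral {0..t} (\<lambda>s. X s * sin s))"
  have Xc: "continuous_on {0..T} X"
    unfolding X_def by (rule indefinite_integral_continuous_1[OF admissible_integrable[OF v]])
  have dC: "(C has_real_derivative X t * cos t) (at t within {0..T})"
   and dS: "(S has_real_derivative X t * sin t) (at t within {0..T})" if t: "t \<in> {0..T}" for t
    unfolding has_real_derivative_iff_has_vector_derivative C_def S_def
    by (rule integral_has_vector_derivative[OF _ t]; intro continuous_intros Xc)+
  have CT: "C T = \<gamma> * sin T" and ST: "S T = - \<gamma> * cos T"
    using trig_moments_by_parts[OF v T] mc ms m0 by (simp_all add: C_def S_def X_def mult.commute)
  have "steers v T (vector [0,0,0])
          (vector [sin T * C T - cos T * S T, cos T * C T + sin T * S T, integral {0..T} v])"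
  proof (rule steers_of_state_equations[OF T admissible_integrable[OF v]])
    fix t assume "t \<in> {0..T}"
    from forced_oscillator_solution[where X=X, OF dC[OF this] dS[OF this]]
    show "((\<lambda>t. sin t * C t - cos t * S t) has_real_derivative cos t * C t + sin t * S t) (at t within {0..T})"
      and "((\<lambda>t. cos t * C t + sin t * S t) has_real_derivative
              integral {0..t} v - (sin t * C t - cos t * S t)) (at t within {0..T})"
      by (simp_all add: X_def)
  qed (simp_all add: C_def S_def)
  moreover have "sin T * C T - cos T * S T = \<gamma>"
    using sin_cos_squared_add[of T] unfolding CT ST by (simp add: power2_eq_square algebra_simps
        flip: distrib_left)
  moreover have "cos T * C T + sin T * S T = 0" unfolding CT ST by (simp add: algebra_simps)
  ultimately show "steers v T (vector [0,0,0]) (vector [\<gamma>,0,\<gamma>])" using m0 by simp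
qed

section \<open>A duality certificate for time optimality\<close>

text \<open>Pointwise \<open>v\<cdot>\<phi> \<le> |\<phi>|\<close> for \<open>|v| \<le> 1\<close>; this is the inequality behind the maximum principle.\<close>
lemma admissible_pairing_le:
  fixes \<phi> :: "real \<Rightarrow> real"
  assumes v: "admissible v" and \<phi>: "continuous_on UNIV \<phi>"
  shows "integral {a..b} (\<lambda>s. v s * \<phi> s) \<le> integral {a..b} (\<lambda>s. \<bar>\<phi> s\<bar>)"
proof (rule integral_le[OF admissible_weighted_integrable(1)[OF v \<phi>]])
  show "(\<lambda>s. \<bar>\<phi> s\<bar>) integrable_on {a..b}"
    by (intro integrable_continuous_interval continuous_intros continuous_on_subset[OF \<phi>]) auto
  fix s
  have "v s * \<phi> s \<le> \<bar>v s\<bar> * \<bar>\<phi> s\<bar>" by (metis abs_ge_self abs_mult)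
  also have "\<dots> \<le> 1 * \<bar>\<phi> s\<bar>" using v by (intro mult_right_mono) (auto simp: admissible_def)
  finally show "v s * \<phi> s \<le> \<bar>\<phi> s\<bar>" by simp
qed

lemma AE_zero_of_integral_zero:
  fixes f :: "real \<Rightarrow> real"
  assumes si: "set_integrable lebesgue {a..b} f" and nn: "\<And>s. s \<in> {a..b} \<Longrightarrow> 0 \<le> f s"
    and z: "integral {a..b} f = 0"
  shows "AE s in lborel. s \<in> {a..b} \<longrightarrow> f s = 0"
proof -
  have ii: "integrable lebesgue (\<lambda>s. indicator {a..b} s *\<^sub>R f s)"
    using si by (simp add: set_integrable_def)
  have "integral\<^sup>L lebesgue (\<lambda>s. indicator {a..b} s *\<^sub>R f s) = 0"
    using set_lebesgue_integral_eq_integral(2)[OF si] z by (simp add: set_lebesgue_integral_def)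
  moreover have "AE s in lebesgue. 0 \<le> indicator {a..b} s *\<^sub>R f s"
    using nn by (intro AE_I2) (auto simp: indicator_def)
  ultimately have "AE s in lebesgue. indicator {a..b} s *\<^sub>R f s = 0"
    using integral_nonneg_eq_0_iff_AE[OF ii] by blast
  then have "AE s in lborel. indicator {a..b} s *\<^sub>R f s = 0" by (simp add: AE_completion_iff)
  then show ?thesis by eventually_elim (auto simp: indicator_def)
qed

lemma admissible_pairing_eq_imp_AE:
  fixes \<phi> :: "real \<Rightarrow> real"
  assumes v: "admissible v" and \<phi>: "continuous_on UNIV \<phi>"
    and eq: "integral {a..b} (\<lambda>s. v s * \<phi> s) = integral {a..b} (\<lambda>s. \<bar>\<phi> s\<bar>)"
  shows "AE s in lborel. s \<in> {a..b} \<longrightarrow> v s * \<phi> s = \<bar>\<phi> s\<bar>"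
proof -
  have vb: "\<bar>v s\<bar> \<le> 1" for s using v by (simp add: admissible_def)
  define f where "f = (\<lambda>s. \<bar>\<phi> s\<bar> - v s * \<phi> s)"
  have gap: "0 \<le> f s" "f s \<le> 2 * \<bar>\<phi> s\<bar>" for s
  proof -
    have "\<bar>v s * \<phi> s\<bar> \<le> 1 * \<bar>\<phi> s\<bar>" unfolding abs_mult using vb by (intro mult_right_mono) auto
    then show "0 \<le> f s" "f s \<le> 2 * \<bar>\<phi> s\<bar>" unfolding f_def by linarith+
  qed
  obtain B where B: "\<And>x. x \<in> {a..b} \<Longrightarrow> norm (\<phi> x) \<le> B"
    using continuous_on_compact_bound[OF compact_Icc continuous_on_subset[OF \<phi>]] by blast
  have "set_integrable lebesgue {a..b} f"
  proof (rule set_integrable_bounded_Icc[where B="2 * B"])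
    show "f \<in> borel_measurable lebesgue"
      using v continuous_lebesgue_measurable[OF \<phi>] unfolding f_def admissible_def
      by (intro borel_measurable_diff borel_measurable_abs borel_measurable_times) auto
    show "\<bar>f x\<bar> \<le> 2 * B" if "x \<in> {a..b}" for x using gap[of x] B[OF that] by simp
  qed
  moreover have "integral {a..b} f = 0"
    using integral_diff[OF _ admissible_weighted_integrable(1)[OF v \<phi>]] eq
    by (simp add: f_def integrable_continuous_interval continuous_intros continuous_on_subset[OF \<phi>])
  ultimately have "AE s in lborel. s \<in> {a..b} \<longrightarrow> f s = 0"
    using AE_zero_of_integral_zero gap(1) by blast
  then show ?thesis by eventually_elim (simp add: f_def)
qed

lemma optimality_certificate:
  fixes \<phi> :: "real \<Rightarrow> real"
  assumes \<phi>: "continuous_on UNIV \<phi>"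
    and pairing: "\<And>v T. admissible v \<Longrightarrow> steers v T x0 x1 \<Longrightarrow> integral {0..T} (\<lambda>s. v s * \<phi> s) = c"
    and u: "admissible u" "steers u T0 x0 x1"
    and total: "integral {0..T0} (\<lambda>s. \<bar>\<phi> s\<bar>) = c"
    and tail: "\<And>T. T < T0 \<Longrightarrow> \<exists>p. T < p \<and> p < T0 \<and> \<phi> p \<noteq> 0"
  shows "min_time T0 x0 x1"
    and "\<And>v. admissible v \<Longrightarrow> steers v T0 x0 x1 \<Longrightarrow>
           AE s in lborel. s \<in> {0..T0} \<longrightarrow> v s * \<phi> s = \<bar>\<phi> s\<bar>"
proof -
  have abs_cont: "continuous_on A (\<lambda>s. \<bar>\<phi> s\<bar>)" for A
    by (intro continuous_intros continuous_on_subset[OF \<phi>]) auto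
  have faster_impossible: False
    if T: "0 \<le> T" "T < T0" and v: "admissible v" "steers v T x0 x1" for T v
  proof -
    have "c \<le> integral {0..T} (\<lambda>s. \<bar>\<phi> s\<bar>)"
      using admissible_pairing_le[OF v(1) \<phi>, of 0 T] pairing[OF v] by simp
    moreover have "integral {0..T} (\<lambda>s. \<bar>\<phi> s\<bar>) + integral {T..T0} (\<lambda>s. \<bar>\<phi> s\<bar>) = c"
      using Henstock_Kurzweil_Integration.integral_combine[OF _ _ integrable_continuous_interval[OF abs_cont]]
        total T by simp
    moreover have "integral {T..T0} (\<lambda>s. \<bar>\<phi> s\<bar>) \<ge> 0"
      by (intro integral_nonneg integrable_continuous_interval abs_cont) auto
    ultimately have "integral {T..T0} (\<lambda>s. \<bar>\<phi> s\<bar>) = 0" by linarith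
    then have "\<forall>s\<in>{T..T0}. \<phi> s = 0" using integral_eq_0_iff[OF abs_cont T(2)] by simp
    then show False using tail[OF T(2)] by fastforce
  qed
  then show "min_time T0 x0 x1"
    using u unfolding min_time_def reachable_in_def by blast
  fix v assume v: "admissible v" "steers v T0 x0 x1"
  have "integral {0..T0} (\<lambda>s. v s * \<phi> s) = integral {0..T0} (\<lambda>s. \<bar>\<phi> s\<bar>)"
    using pairing[OF v] total by simp
  then show "AE s in lborel. s \<in> {0..T0} \<longrightarrow> v s * \<phi> s = \<bar>\<phi> s\<bar>"
    by (rule admissible_pairing_eq_imp_AE[OF v(1) \<phi>])
qed

section \<open>The transcendental equation for the first switching time\<close>

lemma arctan_sin_ratio_deriv:
  fixes a x :: real
  assumes a: "a > 1"
  shows "((\<lambda>x. arctan (sin x / (a - cos x))) has_real_derivative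
            (a * cos x - 1) / (a\<^sup>2 - 2 * a * cos x + 1)) (at x)"
proof -
  have pos: "a - cos x > 0" using a cos_le_one[of x] by linarith
  have pyth: "sin x ^ 2 + cos x ^ 2 = 1" by simp
  have Q: "a\<^sup>2 - 2 * a * cos x + 1 = (a - cos x)\<^sup>2 + (sin x)\<^sup>2"
    using pyth by (simp add: power2_eq_square algebra_simps)
  have Qpos: "(a - cos x)\<^sup>2 + (sin x)\<^sup>2 > 0" using pos by (simp add: add_pos_nonneg)
  have "((\<lambda>x. arctan (sin x / (a - cos x))) has_real_derivative
          inverse (1 + (sin x / (a - cos x))\<^sup>2) *
          ((cos x * (a - cos x) - sin x * sin x) / ((a - cos x) * (a - cos x)))) (at x)"
  proof (rule DERIV_chain2[OF DERIV_arctan])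
    have "((\<lambda>x. a - cos x) has_real_derivative sin x) (at x)" by (auto intro!: derivative_eq_intros)
    from DERIV_divide[OF DERIV_sin this] pos
    show "((\<lambda>x. sin x / (a - cos x)) has_real_derivative
            (cos x * (a - cos x) - sin x * sin x) / ((a - cos x) * (a - cos x))) (at x)"
      by simp
  qed
  moreover have "inverse (1 + (sin x / (a - cos x))\<^sup>2) *
          ((cos x * (a - cos x) - sin x * sin x) / ((a - cos x) * (a - cos x))) =
        (cos x * (a - cos x) - sin x * sin x) / ((a - cos x)\<^sup>2 + (sin x)\<^sup>2)"
  proof -
    have "1 + (sin x / (a - cos x))\<^sup>2 = ((a - cos x)\<^sup>2 + (sin x)\<^sup>2) / ((a - cos x) * (a - cos x))"
      using pos by (simp add: power2_eq_square add_divide_distrib)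
    then show ?thesis using pos Qpos by (simp add: power2_eq_square)
  qed
  moreover have "cos x * (a - cos x) - sin x * sin x = a * cos x - 1"
    using pyth by (simp add: power2_eq_square algebra_simps)
  ultimately show ?thesis unfolding Q by simp
qed

lemma arctan_sin_ratio_slope_lt:
  fixes a c :: real
  assumes a: "a > 1" and c: "c < 1"
  shows "(a * c - 1) / (a\<^sup>2 - 2 * a * c + 1) < 1 / (a - 1)"
proof -
  have Q: "a\<^sup>2 - 2 * a * c + 1 > 0"
  proof -
    have "a\<^sup>2 - 2 * a * c + 1 = (a - 1)\<^sup>2 + 2 * a * (1 - c)" by (simp add: power2_eq_square algebra_simps)
    moreover have "2 * a * (1 - c) > 0" using a c by simp
    ultimately show ?thesis by (metis add_nonneg_pos zero_le_power2)
  qed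
  have "(a * c - 1) * (a - 1) = (a\<^sup>2 - 2 * a * c + 1) - (a * a + a) * (1 - c)"
    by (simp add: power2_eq_square algebra_simps)
  moreover have "(a * a + a) * (1 - c) > 0" using a c by (intro mult_pos_pos) (auto simp: add_pos_pos)
  ultimately have "(a * c - 1) * (a - 1) < a\<^sup>2 - 2 * a * c + 1" by linarith
  then show ?thesis using Q a by (simp add: divide_simps)
qed

text \<open>The equation defining \<open>\<tau>\<close> has exactly one root in \<open>(0,\<pi>)\<close>: its left minus right side
  is strictly increasing (by the slope bound with \<open>a = 2\<rho>\<close>), negative at \<open>0\<close> and positive at \<open>\<pi>\<close>.\<close>
lemma tau_exists_unique:
  fixes \<gamma> :: real and \<rho> :: nat
  assumes rho: "\<rho> \<ge> 1" and gamma_lo: "2*(real \<rho> - 1)*pi < \<gamma>" and gamma_hi: "\<gamma> < 2*real \<rho>*pi"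
  shows "\<exists>!\<tau>. 0 < \<tau> \<and> \<tau> < pi \<and>
          (2*\<tau> + 2*(real \<rho> - 1)*pi - \<gamma>) / (2*real \<rho> - 1) = 2 * arctan (sin \<tau> / (2*real \<rho> - cos \<tau>))"
proof -
  define a where "a = 2 * real \<rho>"
  have a: "a > 1" using rho by (simp add: a_def)
  define f where "f = (\<lambda>\<tau>. (2*\<tau> + 2*(real \<rho> - 1)*pi - \<gamma>) / (a - 1) - 2 * arctan (sin \<tau> / (a - cos \<tau>)))"
  have deriv: "(f has_real_derivative 2 / (a - 1) - 2 * ((a * cos x - 1) / (a\<^sup>2 - 2 * a * cos x + 1))) (at x)" for x
  proof -
    have "((\<lambda>\<tau>. 2*\<tau> + 2*(real \<rho> - 1)*pi - \<gamma>) has_real_derivative 2) (at x)"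
      by (auto intro!: derivative_eq_intros)
    note DERIV_cdivide[OF this, of "a - 1"]
    from DERIV_diff[OF this DERIV_cmult[OF arctan_sin_ratio_deriv[OF a], of 2]]
    show ?thesis by (simp add: f_def)
  qed
  have slope_pos: "2 / (a - 1) - 2 * ((a * cos x - 1) / (a\<^sup>2 - 2 * a * cos x + 1)) > 0"
    if "0 < x" "x < pi" for x
  proof -
    have "cos x < cos 0" using that by (intro cos_monotone_0_pi) auto
    then have "(a * cos x - 1) / (a\<^sup>2 - 2 * a * cos x + 1) < 1 / (a - 1)"
      by (intro arctan_sin_ratio_slope_lt[OF a]) simp
    moreover have "2 / (a - 1) = 2 * (1 / (a - 1))" by simp
    ultimately show ?thesis by linarith
  qed
  have increasing: "f s < f t" if "0 < s" "s < t" "t < pi" for s t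
  proof (rule DERIV_pos_imp_increasing[OF that(2)])
    fix x assume "s \<le> x" "x \<le> t"
    then show "\<exists>y. (f has_real_derivative y) (at x) \<and> y > 0"
      using deriv[of x] slope_pos[of x] that by (intro exI[of _ "2 / (a - 1) - 2 * ((a * cos x - 1) / (a\<^sup>2 - 2 * a * cos x + 1))"]) simp
  qed
  have "continuous_on {0..pi} f"
  proof -
    have "a - cos x \<noteq> 0" for x using a cos_le_one[of x] by linarith
    then show ?thesis unfolding f_def using a by (intro continuous_intros) auto
  qed
  moreover have "f 0 < 0" unfolding f_def using gamma_lo a by (simp add: divide_neg_pos)
  moreover have "f pi > 0" unfolding f_def using gamma_hi a by (simp add: a_def algebra_simps)
  ultimately obtain t where "0 \<le> t" "t \<le> pi" "f t = 0"
    using IVT'[of f 0 0 pi] by auto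
  with \<open>f 0 < 0\<close> \<open>f pi > 0\<close> have t: "0 < t" "t < pi" "f t = 0"
    by (auto simp: order.order_iff_strict)
  have "s = t" if s: "0 < s" "s < pi" "f s = 0" for s
  proof (rule linorder_cases[of s t])
    assume "s < t" then show ?thesis using increasing[of s t] s t by simp
  next
    assume "t < s" then show ?thesis using increasing[of t s] s t by simp
  qed
  moreover have "(2*\<tau> + 2*(real \<rho> - 1)*pi - \<gamma>) / (2*real \<rho> - 1) = 2 * arctan (sin \<tau> / (2*real \<rho> - cos \<tau>))
                   \<longleftrightarrow> f \<tau> = 0" for \<tau>
    by (simp add: f_def a_def)
  ultimately show ?thesis using t by blast
qed

section \<open>The bang-bang candidate for \<open>2(\<rho>-1)\<pi> < \<gamma> < 2\<rho>\<pi>\<close>\<close>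

lemma cos_add_2npi: "cos (x + 2*real k*pi) = cos x"
  by (simp add: cos_add)

lemma sin_add_2npi: "sin (x + 2*real k*pi) = sin x"
  by (simp add: sin_add)

lemma cos_lt_outside:
  assumes "0 < h" "h < pi" "h < x" "x < 2*pi - h"
  shows "cos x < cos h"
proof (cases "x \<le> pi")
  case True then show ?thesis using assms by (intro cos_monotone_0_pi) auto
next
  case False
  have "cos (2*pi - x) < cos h" using assms False by (intro cos_monotone_0_pi) auto
  then show ?thesis by simp
qed

text \<open>The identity behind the vanishing trigonometric moments of the candidate control:
  if \<open>sin A = 2R sin h\<close>, then \<open>sin 2A = 2R (sin (A+h) - sin (A-h))\<close> and
  \<open>1 - cos 2A = 2R (cos (A-h) - cos (A+h))\<close>.\<close>
lemma double_angle_balance: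
  fixes A h R :: real
  assumes "sin A = 2*R * sin h"
  shows "sin (2*A) - 2*R*(sin (A+h) - sin (A-h)) = 0"
    and "(1 - cos (2*A)) - 2*R*(cos (A-h) - cos (A+h)) = 0"
proof -
  have "sin (A+h) - sin (A-h) = 2 * cos A * sin h" by (simp add: sin_add sin_diff)
  moreover have "sin (2*A) = 2 * sin A * cos A" by (rule sin_double)
  ultimately show "sin (2*A) - 2*R*(sin (A+h) - sin (A-h)) = 0"
    using assms by algebra
  have "cos (A-h) - cos (A+h) = 2 * sin A * sin h" by (simp add: cos_add cos_diff)
  moreover have "1 - cos (2*A) = 2 * (sin A)^2"
    using cos_double[of A] sin_cos_squared_add[of A] by linarith
  ultimately show "(1 - cos (2*A)) - 2*R*(cos (A-h) - cos (A+h)) = 0"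
    using assms by algebra
qed

text \<open>With \<open>\<beta>\<close> the length of the even intervals and \<open>\<eta> = \<beta>/2\<close>, the equation says exactly
  \<open>\<eta> = arctan (sin \<tau> / (2\<rho> - cos \<tau>))\<close>, i.e. \<open>sin (\<tau> + \<eta>) = 2\<rho> sin \<eta>\<close>.  The switching function
  \<open>\<phi>(s) = cos \<eta> - cos (s - \<tau> - \<eta>)\<close> is negative exactly on the intervals
  \<open>(\<tau> + 2k\<pi>, \<tau> + \<beta> + 2k\<pi>)\<close>, where the candidate control \<open>u_opt\<close> is \<open>-1\<close>.\<close>
locale switching_solution =
  fixes \<rho> :: nat and \<gamma> \<tau> :: real
  assumes rho_pos: "\<rho> \<ge> 1" and gamma_lo: "2*(real \<rho> - 1)*pi < \<gamma>" and gamma_hi: "\<gamma> < 2*real \<rho>*pi"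
    and tau_pos: "0 < \<tau>" and tau_lt_pi: "\<tau> < pi"
    and tau_eq: "(2*\<tau> + 2*(real \<rho> - 1)*pi - \<gamma>) / (2*real \<rho> - 1) =
                   2 * arctan (sin \<tau> / (2*real \<rho> - cos \<tau>))"
begin

definition \<beta> :: real where "\<beta> = (2*\<tau> + 2*(real \<rho> - 1)*pi - \<gamma>) / (2*real \<rho> - 1)"
definition \<eta> :: real where "\<eta> = \<beta> / 2"
definition \<phi> :: "real \<Rightarrow> real" where "\<phi> s = cos \<eta> - cos (s - (\<tau> + \<eta>))"
definition neg_interval :: "nat \<Rightarrow> real set" where
  "neg_interval k = {\<tau> + 2*real k*pi .. \<tau> + \<beta> + 2*real k*pi}"
definition u_opt :: "real \<Rightarrow> real" where
  "u_opt s = 1 - 2 * (\<Sum>k<\<rho>. indicator (neg_interval k) s)"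
definition T_opt :: real where "T_opt = 2*\<tau> + \<beta> + 2*(real \<rho> - 1)*pi"

lemma eta_arctan: "\<eta> = arctan (sin \<tau> / (2*real \<rho> - cos \<tau>))"
  using tau_eq by (simp add: \<eta>_def \<beta>_def)

lemma ratio_pos: "sin \<tau> / (2*real \<rho> - cos \<tau>) > 0"
proof (rule divide_pos_pos)
  show "sin \<tau> > 0" using tau_pos tau_lt_pi by (rule sin_gt_zero)
  show "2*real \<rho> - cos \<tau> > 0" using rho_pos cos_le_one[of \<tau>] by linarith
qed

lemma eta_bounds: "0 < \<eta>" "\<eta> < pi/2"
  using ratio_pos arctan_ubound by (auto simp: eta_arctan)

lemma beta_eq: "\<beta> = 2*\<eta>" by (simp add: \<eta>_def)

lemma beta_bounds: "0 < \<beta>" "\<beta> < pi"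
  using eta_bounds by (auto simp: beta_eq)

lemma sin_tau_eta: "sin (\<tau> + \<eta>) = 2*real \<rho> * sin \<eta>"
proof -
  define q where "q = sin \<tau> / (2*real \<rho> - cos \<tau>)"
  have cos_pos: "cos \<eta> > 0" unfolding eta_arctan cos_arctan by (simp add: add_pos_nonneg)
  have "tan \<eta> = q" unfolding eta_arctan q_def by (rule tan_arctan)
  then have "sin \<eta> = q * cos \<eta>" using cos_pos by (simp add: tan_def field_simps)
  moreover have "2*real \<rho> - cos \<tau> > 0" using rho_pos cos_le_one[of \<tau>] by linarith
  ultimately have "sin \<eta> * (2*real \<rho> - cos \<tau>) = sin \<tau> * cos \<eta>"
    by (simp add: q_def field_simps)
  then show ?thesis by (simp add: sin_add algebra_simps)
qed

text \<open>The definition of \<open>\<beta>\<close>, solved for \<open>\<gamma>\<close>.  (Oriented this way because \<open>\<beta>\<close> itself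
  depends on \<open>\<gamma>\<close>, so \<open>\<gamma>\<close> must never be rewritten.)\<close>
lemma beta_mult: "(2*real \<rho> - 1) * \<beta> = 2*\<tau> + 2*(real \<rho> - 1)*pi - \<gamma>"
  using rho_pos unfolding \<beta>_def by (simp add: field_simps)

lemma T_opt_eq: "T_opt = (4*real \<rho>*(\<tau> + (real \<rho> - 1)*pi) - \<gamma>) / (2*real \<rho> - 1)"
proof -
  have "T_opt * (2*real \<rho> - 1) = (2*real \<rho> - 1) * \<beta> + (2*\<tau> + 2*(real \<rho> - 1)*pi) * (2*real \<rho> - 1)"
    by (simp add: T_opt_def algebra_simps)
  also have "\<dots> = 4*real \<rho>*(\<tau> + (real \<rho> - 1)*pi) - \<gamma>"
    unfolding beta_mult by (simp add: algebra_simps)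
  finally show ?thesis using rho_pos by (simp add: eq_divide_eq)
qed

lemma sw_len_eq:
  "sw_len \<rho> \<gamma> \<tau> j = (if j = 1 \<or> j = 2*\<rho>+1 then \<tau> else if even j then \<beta> else 2*pi - \<beta>)"
proof -
  have "(2*pi - \<beta>) * (2*real \<rho> - 1) = 2*pi * (2*real \<rho> - 1) - (2*real \<rho> - 1) * \<beta>"
    by (simp add: algebra_simps)
  also have "\<dots> = 2*real \<rho>*pi - 2*\<tau> + \<gamma>"
    unfolding beta_mult by (simp add: algebra_simps)
  finally have "(2*real \<rho>*pi - 2*\<tau> + \<gamma>) / (2*real \<rho> - 1) = 2*pi - \<beta>"
    using rho_pos by (simp add: divide_eq_eq)
  then show ?thesis unfolding sw_len_def \<beta>_def[symmetric] by simp
qed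

lemma sw_time_eq:
  "j \<le> 2*\<rho> \<Longrightarrow> sw_time \<rho> \<gamma> \<tau> j =
     (if j = 0 then 0 else if even j then \<tau> + \<beta> + (real j - 2)*pi else \<tau> + (real j - 1)*pi)"
proof (induction j)
  case 0 then show ?case by (simp add: sw_time_def)
next
  case (Suc j)
  have "sw_time \<rho> \<gamma> \<tau> (Suc j) = sw_time \<rho> \<gamma> \<tau> j + sw_len \<rho> \<gamma> \<tau> (Suc j)"
    by (simp add: sw_time_def atLeastAtMostSuc_conv)
  moreover have "Suc j \<noteq> 2*\<rho>+1" using Suc.prems by simp
  ultimately show ?case using Suc by (auto simp: sw_len_eq algebra_simps)
qed

lemma sw_time_even: "1 \<le> k \<Longrightarrow> k \<le> \<rho> \<Longrightarrow> sw_time \<rho> \<gamma> \<tau> (2*k) = \<tau> + \<beta> + 2*(real k - 1)*pi"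
  by (simp add: sw_time_eq algebra_simps)

lemma sw_time_odd: "k < \<rho> \<Longrightarrow> sw_time \<rho> \<gamma> \<tau> (2*k+1) = \<tau> + 2*real k*pi"
  by (simp add: sw_time_eq algebra_simps)

lemma sw_time_last: "sw_time \<rho> \<gamma> \<tau> (2*\<rho>+1) = T_opt"
proof -
  have "sw_time \<rho> \<gamma> \<tau> (2*\<rho>+1) = sw_time \<rho> \<gamma> \<tau> (2*\<rho>) + sw_len \<rho> \<gamma> \<tau> (2*\<rho>+1)"
    by (simp add: sw_time_def atLeastAtMostSuc_conv)
  also have "\<dots> = \<tau> + \<beta> + (2*real \<rho> - 2)*pi + \<tau>"
    using rho_pos by (simp add: sw_time_eq sw_len_eq)
  finally show ?thesis by (simp add: T_opt_def algebra_simps)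
qed

lemma neg_interval_iff:
  "s \<in> neg_interval k \<longleftrightarrow> \<tau> + 2*real k*pi \<le> s \<and> s \<le> \<tau> + \<beta> + 2*real k*pi"
  by (simp add: neg_interval_def)

lemma phi_nonpos: assumes "s \<in> neg_interval k" shows "\<phi> s \<le> 0"
proof -
  define x where "x = s - (\<tau> + \<eta>) - 2*real k*pi"
  have "\<bar>x\<bar> \<le> \<eta>" using assms unfolding neg_interval_iff x_def beta_eq by auto
  then have "cos \<bar>x\<bar> \<ge> cos \<eta>" using eta_bounds by (intro cos_monotone_0_pi_le) auto
  moreover have "cos (s - (\<tau> + \<eta>)) = cos \<bar>x\<bar>" using cos_add_2npi[of x k] by (simp add: x_def)
  ultimately show ?thesis by (simp add: \<phi>_def)
qed

lemma phi_neg: assumes "\<tau> + 2*real k*pi < s" "s < \<tau> + \<beta> + 2*real k*pi" shows "\<phi> s < 0"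
proof -
  define x where "x = s - (\<tau> + \<eta>) - 2*real k*pi"
  have "\<bar>x\<bar> < \<eta>" using assms unfolding x_def beta_eq by auto
  then have "cos \<bar>x\<bar> > cos \<eta>" using eta_bounds by (intro cos_monotone_0_pi) auto
  moreover have "cos (s - (\<tau> + \<eta>)) = cos \<bar>x\<bar>" using cos_add_2npi[of x k] by (simp add: x_def)
  ultimately show ?thesis by (simp add: \<phi>_def)
qed

lemma T_opt_lt: "T_opt < \<tau> + 2*real \<rho>*pi"
  using beta_bounds tau_lt_pi by (simp add: T_opt_def algebra_simps)

text \<open>Off the negative intervals, \<open>\<phi>\<close> is positive on \<open>[0, T_opt]\<close>: such an \<open>s\<close> lies in some gap
  \<open>(\<tau> + \<beta> + 2k\<pi>, \<tau> + 2(k+1)\<pi>)\<close> (or before \<open>\<tau>\<close>), where \<open>s - \<tau> - \<eta>\<close> is in \<open>(\<eta>, 2\<pi> - \<eta>)\<close> mod \<open>2\<pi>\<close>.\<close>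
lemma phi_pos:
  assumes s0: "0 \<le> s" and sT: "s \<le> T_opt" and nin: "\<forall>k<\<rho>. s \<notin> neg_interval k"
  shows "\<phi> s > 0"
proof (cases "s < \<tau>")
  case True
  define x where "x = (\<tau> + \<eta>) - s"
  have "\<eta> < x" "x < 2*pi - \<eta>" using True s0 beta_bounds tau_lt_pi unfolding x_def beta_eq by auto
  then have "cos x < cos \<eta>" using eta_bounds by (intro cos_lt_outside) auto
  moreover have "cos (s - (\<tau> + \<eta>)) = cos x" by (metis cos_minus minus_diff_eq x_def)
  ultimately show ?thesis by (simp add: \<phi>_def)
next
  case False
  define y where "y = (s - \<tau>) / (2*pi)"
  define k where "k = nat \<lfloor>y\<rfloor>"
  have "real k = of_int \<lfloor>y\<rfloor>" using False by (simp add: k_def y_def)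
  then have "real k \<le> y" "y < real k + 1" by linarith+
  then have k_lo: "real k * (2*pi) \<le> s - \<tau>" and k_hi: "s - \<tau> < (real k + 1) * (2*pi)"
    by (simp_all add: y_def pos_le_divide_eq pos_divide_less_eq)
  have "k < \<rho>"
  proof (rule ccontr)
    assume "\<not> k < \<rho>"
    then have "real \<rho> * (2*pi) \<le> real k * (2*pi)" by (intro mult_right_mono) auto
    then show False using k_lo sT T_opt_lt by linarith
  qed
  then have "s \<notin> neg_interval k" using nin by auto
  then have gap: "s > \<tau> + \<beta> + 2*real k*pi" using k_lo unfolding neg_interval_iff by (auto simp: algebra_simps)
  define x where "x = s - (\<tau> + \<eta>) - 2*real k*pi"
  have "\<eta> < x" "x < 2*pi - \<eta>" using gap k_hi unfolding x_def beta_eq by (auto simp: algebra_simps)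
  then have "cos x < cos \<eta>" using eta_bounds by (intro cos_lt_outside) auto
  moreover have "cos (s - (\<tau> + \<eta>)) = cos x" using cos_add_2npi[of x k] by (simp add: x_def)
  ultimately show ?thesis by (simp add: \<phi>_def)
qed

lemma phi_continuous: "continuous_on UNIV \<phi>"
  unfolding \<phi>_def[abs_def] by (intro continuous_intros)

text \<open>The negative intervals are pairwise disjoint (they have length \<open>\<beta> < 2\<pi>\<close>), so \<open>u_opt\<close>
  takes only the values \<open>\<plusminus>1\<close>.\<close>
lemma neg_intervals_disjoint: assumes "s \<in> neg_interval k" "s \<in> neg_interval k'" shows "k = k'"
proof -
  have lt: "real k < real k' + 1" if "s \<in> neg_interval k" "s \<in> neg_interval k'" for k k'
  proof -
    have "(real k - real k') * (2*pi) \<le> \<beta>" using that unfolding neg_interval_iff by (auto simp: algebra_simps)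
    also have "\<beta> < 1 * (2*pi)" using beta_bounds by simp
    finally show ?thesis by (simp add: mult_less_cancel_right)
  qed
  have "real k < real k' + 1" "real k' < real k + 1" using lt assms by auto
  then show ?thesis by linarith
qed

lemma u_opt_eq: "u_opt s = (if \<exists>k<\<rho>. s \<in> neg_interval k then -1 else 1)"
proof (cases "\<exists>k<\<rho>. s \<in> neg_interval k")
  case True
  then obtain k0 where k0: "k0 < \<rho>" "s \<in> neg_interval k0" by auto
  have "(\<Sum>k<\<rho>. indicator (neg_interval k) s :: real) = (\<Sum>k<\<rho>. if k = k0 then 1 else 0)"
    by (rule sum.cong) (auto simp: indicator_def k0(2) dest: neg_intervals_disjoint[OF k0(2)])
  then show ?thesis using True k0 by (simp add: u_opt_def)
qed (simp add: u_opt_def indicator_def)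

lemma u_opt_admissible: "admissible u_opt"
proof -
  have "u_opt \<in> borel_measurable lborel" unfolding u_opt_def[abs_def] neg_interval_def by measurable
  then show ?thesis unfolding admissible_def by (auto simp: u_opt_eq measurable_completion)
qed

lemma u_opt_phi: assumes "s \<in> {0..T_opt}" shows "u_opt s * \<phi> s = \<bar>\<phi> s\<bar>"
proof (cases "\<exists>k<\<rho>. s \<in> neg_interval k")
  case True
  then have "\<phi> s \<le> 0" using phi_nonpos by blast
  then show ?thesis using True by (simp add: u_opt_eq)
next
  case False
  then have "\<phi> s > 0" using assms by (intro phi_pos) auto
  then show ?thesis using False by (simp add: u_opt_eq)
qed

lemma neg_interval_subset: assumes "k < \<rho>" shows "neg_interval k \<subseteq> {0..T_opt}"
proof -
  have "real k \<le> real \<rho> - 1" using assms by linarith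
  then have "0 \<le> (2*(real \<rho> - 1 - real k))*pi" by (intro mult_nonneg_nonneg) auto
  moreover have "T_opt - (\<tau> + \<beta> + 2*real k*pi) = \<tau> + (2*(real \<rho> - 1 - real k))*pi"
    by (simp add: T_opt_def algebra_simps)
  moreover have "0 \<le> 2*real k*pi" by simp
  ultimately show ?thesis unfolding neg_interval_def using tau_pos beta_bounds by auto
qed

lemma u_opt_integral:
  assumes g: "continuous_on UNIV g"
  shows "integral {0..T_opt} (\<lambda>s. u_opt s * g s) =
           integral {0..T_opt} g - 2 * (\<Sum>k<\<rho>. integral (neg_interval k) g)"
proof -
  have gi: "g integrable_on {a..b}" for a b
    by (rule integrable_continuous_interval) (rule continuous_on_subset[OF g], simp)
  have restrict: "(\<lambda>s. if s \<in> neg_interval k then g s else 0) integrable_on {0..T_opt}"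
      "integral {0..T_opt} (\<lambda>s. if s \<in> neg_interval k then g s else 0) = integral (neg_interval k) g"
    if "k < \<rho>" for k
    using neg_interval_subset[OF that] gi
    by (simp_all add: integrable_restrict_Int integral_restrict_Int Int_absorb2)
       (simp add: neg_interval_def)
  have pointwise: "u_opt s * g s = g s - 2 * (\<Sum>k<\<rho>. if s \<in> neg_interval k then g s else 0)" for s
  proof -
    have "(\<Sum>k<\<rho>. indicator (neg_interval k) s :: real) * g s = (\<Sum>k<\<rho>. indicator (neg_interval k) s * g s)"
      by (rule sum_distrib_right)
    also have "\<dots> = (\<Sum>k<\<rho>. if s \<in> neg_interval k then g s else 0)"
      by (rule sum.cong) (auto simp: indicator_def)
    finally show ?thesis by (simp add: u_opt_def algebra_simps)
  qed
  have "integral {0..T_opt} (\<lambda>s. u_opt s * g s) =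
      integral {0..T_opt} g - 2 * integral {0..T_opt} (\<lambda>s. \<Sum>k<\<rho>. if s \<in> neg_interval k then g s else 0)"
  proof -
    have "(\<lambda>s. \<Sum>k<\<rho>. if s \<in> neg_interval k then g s else 0) integrable_on {0..T_opt}"
      using restrict by (intro integrable_sum) auto
    then show ?thesis
      using integral_diff[OF gi integrable_on_mult_right[of _ _ 2]] pointwise by simp
  qed
  also have "\<dots> = integral {0..T_opt} g - 2 * (\<Sum>k<\<rho>. integral (neg_interval k) g)"
    using restrict by (subst integral_sum) auto
  finally show ?thesis .
qed

lemma T_opt_nonneg: "T_opt \<ge> 0" using tau_pos beta_bounds rho_pos by (simp add: T_opt_def)

lemma T_opt_mod_2pi: "T_opt = 2*(\<tau> + \<eta>) + 2*real (\<rho> - 1)*pi"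
  using rho_pos by (simp add: T_opt_def beta_eq of_nat_diff)

lemma u_opt_moments:
  "integral {0..T_opt} u_opt = \<gamma>"
  "integral {0..T_opt} (\<lambda>s. u_opt s * cos s) = 0"
  "integral {0..T_opt} (\<lambda>s. u_opt s * sin s) = 0"
proof -
  have ordered: "\<tau> + 2*real k*pi \<le> \<tau> + \<beta> + 2*real k*pi" for k using beta_bounds by simp
  note on_interval = integral_by_primitive[OF ordered, folded neg_interval_def]
   and on_total = integral_by_primitive[OF T_opt_nonneg]
  have d_id: "((\<lambda>x. x) has_real_derivative 1) (at x)" for x by simp
  have "integral {0..T_opt} (\<lambda>s. u_opt s * 1) = T_opt - 2 * (real \<rho> * \<beta>)"
    using u_opt_integral[of "\<lambda>_. 1"] on_interval[OF d_id] on_total[OF d_id] by simp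
  also have "\<dots> = \<gamma>"
    using beta_mult unfolding T_opt_def by (simp add: algebra_simps)
  finally show "integral {0..T_opt} u_opt = \<gamma>" by simp
  have "integral {0..T_opt} (\<lambda>s. u_opt s * cos s) = sin T_opt - 2 * (real \<rho> * (sin (\<tau> + \<beta>) - sin \<tau>))"
    using u_opt_integral[of cos] on_interval[OF DERIV_sin] on_total[OF DERIV_sin]
    by (simp add: sin_add_2npi continuous_intros)
  also have "\<dots> = sin (2*(\<tau> + \<eta>)) - 2*real \<rho>*(sin ((\<tau> + \<eta>) + \<eta>) - sin ((\<tau> + \<eta>) - \<eta>))"
    unfolding T_opt_mod_2pi sin_add_2npi by (simp add: beta_eq algebra_simps)
  also have "\<dots> = 0" by (rule double_angle_balance(1)[OF sin_tau_eta])
  finally show "integral {0..T_opt} (\<lambda>s. u_opt s * cos s) = 0" .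
  have d_cos: "((\<lambda>x. - cos x) has_real_derivative sin x) (at x)" for x
    by (auto intro!: derivative_eq_intros)
  have "integral {0..T_opt} (\<lambda>s. u_opt s * sin s) = (1 - cos T_opt) - 2 * (real \<rho> * (cos \<tau> - cos (\<tau> + \<beta>)))"
    using u_opt_integral[of sin] on_interval[OF d_cos] on_total[OF d_cos]
    by (simp add: cos_add_2npi continuous_intros)
  also have "\<dots> = (1 - cos (2*(\<tau> + \<eta>))) - 2*real \<rho>*(cos ((\<tau> + \<eta>) - \<eta>) - cos ((\<tau> + \<eta>) + \<eta>))"
    unfolding T_opt_mod_2pi cos_add_2npi by (simp add: beta_eq algebra_simps)
  also have "\<dots> = 0" by (rule double_angle_balance(2)[OF sin_tau_eta])
  finally show "integral {0..T_opt} (\<lambda>s. u_opt s * sin s) = 0" .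
qed

lemma u_opt_steers: "steers u_opt T_opt (vector [0,0,0]) (vector [\<gamma>,0,\<gamma>])"
  using steers_iff_moments[OF u_opt_admissible] T_opt_nonneg u_opt_moments by simp

text \<open>Since \<open>\<phi>\<close> is a combination of \<open>1, cos, sin\<close>, its pairing with any control reaching
  \<open>(\<gamma>,0,\<gamma>)\<close> is the same number \<open>\<gamma> cos \<eta>\<close>; for \<open>u_opt\<close> this pairing is \<open>\<integral>|\<phi>|\<close>.\<close>
lemma phi_pairing:
  assumes v: "admissible v" and st: "steers v T (vector [0,0,0]) (vector [\<gamma>,0,\<gamma>])"
  shows "integral {0..T} (\<lambda>s. v s * \<phi> s) = cos \<eta> * \<gamma>"
proof -
  have i0: "v integrable_on {0..T}" by (rule admissible_integrable[OF v])
  have ic: "(\<lambda>s. v s * cos s) integrable_on {0..T}" and isin: "(\<lambda>s. v s * sin s) integrable_on {0..T}"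
    by (intro admissible_weighted_integrable(1)[OF v] continuous_intros)+
  have "(\<lambda>s. v s * \<phi> s) =
          (\<lambda>s. cos \<eta> * v s - (cos (\<tau>+\<eta>) * (v s * cos s) + sin (\<tau>+\<eta>) * (v s * sin s)))"
    by (auto simp: \<phi>_def cos_diff algebra_simps fun_eq_iff)
  then have "integral {0..T} (\<lambda>s. v s * \<phi> s) = cos \<eta> * integral {0..T} v -
      (cos (\<tau>+\<eta>) * integral {0..T} (\<lambda>s. v s * cos s) + sin (\<tau>+\<eta>) * integral {0..T} (\<lambda>s. v s * sin s))"
    using i0 ic isin by (simp add: integral_diff integral_add integrable_add integrable_on_mult_right)
  then show ?thesis using st steers_iff_moments[OF v] by simp
qed

lemma abs_phi_integral: "integral {0..T_opt} (\<lambda>s. \<bar>\<phi> s\<bar>) = cos \<eta> * \<gamma>"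
proof -
  have "integral {0..T_opt} (\<lambda>s. \<bar>\<phi> s\<bar>) = integral {0..T_opt} (\<lambda>s. u_opt s * \<phi> s)"
    by (rule integral_cong) (simp add: u_opt_phi)
  also have "\<dots> = cos \<eta> * \<gamma>" by (rule phi_pairing[OF u_opt_admissible u_opt_steers])
  finally show ?thesis .
qed

text \<open>Even intervals are the interiors of the negative intervals; odd ones are the gaps.\<close>
lemma on_even_interval:
  assumes k: "1 \<le> k" "k \<le> \<rho>"
    and lo: "sw_time \<rho> \<gamma> \<tau> (2*k-1) < t" and hi: "t < sw_time \<rho> \<gamma> \<tau> (2*k)"
  shows "0 < t \<and> t < T_opt \<and> u_opt t = -1 \<and> \<phi> t < 0"
proof -
  have "2*k - 1 = 2*(k-1) + 1" using k by simp
  then have lo': "\<tau> + 2*real (k-1)*pi < t" using lo sw_time_odd[of "k-1"] k by simp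
  have hi': "t < \<tau> + \<beta> + 2*real (k-1)*pi"
    using hi sw_time_even[OF k] k by (simp add: of_nat_diff algebra_simps)
  have "t \<in> neg_interval (k-1)" "k - 1 < \<rho>" using lo' hi' k by (auto simp: neg_interval_iff)
  then have "u_opt t = -1" by (auto simp: u_opt_eq)
  moreover have "2*real (k-1)*pi \<le> 2*(real \<rho> - 1)*pi" using k by (simp add: of_nat_diff)
  then have "t < T_opt" using hi' unfolding T_opt_def using tau_pos by linarith
  moreover have "0 < t" using lo' tau_pos by (smt (verit) of_nat_0_le_iff pi_ge_zero mult_nonneg_nonneg)
  ultimately show ?thesis using phi_neg[OF lo' hi'] by simp
qed

lemma on_odd_interval:
  assumes k: "k \<le> \<rho>"
    and lo: "sw_time \<rho> \<gamma> \<tau> (2*k) < t" and hi: "t < sw_time \<rho> \<gamma> \<tau> (2*k+1)"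
  shows "0 < t \<and> t < T_opt \<and> u_opt t = 1 \<and> \<phi> t > 0"
proof -
  have lo': "k \<noteq> 0 \<Longrightarrow> \<tau> + \<beta> + 2*(real k - 1)*pi < t" and t_pos: "0 < t"
  proof -
    show "k \<noteq> 0 \<Longrightarrow> \<tau> + \<beta> + 2*(real k - 1)*pi < t" using lo sw_time_even[of k] k by simp
    have "0 \<le> sw_time \<rho> \<gamma> \<tau> (2*k)"
      using sw_time_even[of k] k tau_pos beta_bounds by (cases "k = 0") (auto simp: sw_time_def)
    then show "0 < t" using lo by linarith
  qed
  have hi': "t < \<tau> + 2*real k*pi" and t_lt: "t < T_opt"
  proof -
    show "t < T_opt"
    proof (cases "k = \<rho>")
      case True then show ?thesis using hi sw_time_last by simp
    next
      case False
      then have "t < \<tau> + 2*real k*pi" using hi k sw_time_odd by simp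
      then show ?thesis using neg_interval_subset[of k] False k beta_bounds
        by (fastforce simp: neg_interval_def)
    qed
    show "t < \<tau> + 2*real k*pi"
      using hi k sw_time_odd[of k] \<open>t < T_opt\<close> T_opt_lt by (cases "k = \<rho>") auto
  qed
  have outside: "\<forall>k'<\<rho>. t \<notin> neg_interval k'"
  proof (intro allI impI)
    fix k' assume "k' < \<rho>"
    show "t \<notin> neg_interval k'"
    proof (cases "k' < k")
      case True
      then have "2*real k'*pi \<le> 2*(real k - 1)*pi" by simp
      moreover have "\<tau> + \<beta> + 2*(real k - 1)*pi < t" using lo' True by simp
      ultimately show ?thesis unfolding neg_interval_iff by linarith
    next
      case False
      then have "2*real k*pi \<le> 2*real k'*pi" by simp
      then show ?thesis using hi' unfolding neg_interval_iff by linarith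
    qed
  qed
  then show ?thesis using t_pos t_lt phi_pos[of t] by (auto simp: u_opt_eq)
qed

lemma on_switching_interval:
  assumes j: "j \<in> {1..2*\<rho>+1}"
    and t: "sw_time \<rho> \<gamma> \<tau> (j-1) < t" "t < sw_time \<rho> \<gamma> \<tau> j"
  shows "0 < t \<and> t < T_opt \<and> u_opt t = (-1)^(j-1) \<and> \<phi> t \<noteq> 0"
proof (cases "even j")
  case True
  then obtain k where "j = 2*k" by blast
  with j t on_even_interval[of k t] show ?thesis by auto
next
  case False
  then obtain k where "j = 2*k + 1" using oddE by blast
  with j t on_odd_interval[of k t] show ?thesis by auto
qed

lemma time_optimal:
  shows "min_time T_opt (vector [0,0,0]) (vector [\<gamma>,0,\<gamma>])"
    and "admissible v \<Longrightarrow> steers v T_opt (vector [0,0,0]) (vector [\<gamma>,0,\<gamma>]) \<Longrightarrow>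
           j \<in> {1..2*\<rho>+1} \<Longrightarrow>
           AE t in lborel. sw_time \<rho> \<gamma> \<tau> (j-1) < t \<and> t < sw_time \<rho> \<gamma> \<tau> j \<longrightarrow> v t = (-1)^(j-1)"
proof -
  have tail: "\<exists>p. T < p \<and> p < T_opt \<and> \<phi> p \<noteq> 0" if "T < T_opt" for T
  proof -
    define p where "p = (max T (sw_time \<rho> \<gamma> \<tau> (2*\<rho>)) + T_opt) / 2"
    have "sw_time \<rho> \<gamma> \<tau> (2*\<rho>) < T_opt"
      using sw_time_even[of \<rho>] rho_pos tau_pos by (simp add: T_opt_def algebra_simps)
    then have "T < p" "sw_time \<rho> \<gamma> \<tau> (2*\<rho>+1-1) < p" "p < sw_time \<rho> \<gamma> \<tau> (2*\<rho>+1)"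
      using that sw_time_last by (auto simp: p_def)
    then show ?thesis using on_switching_interval[of "2*\<rho>+1" p] by auto
  qed
  have certificate: "min_time T_opt (vector [0,0,0]) (vector [\<gamma>,0,\<gamma>])"
    "\<And>v. admissible v \<Longrightarrow> steers v T_opt (vector [0,0,0]) (vector [\<gamma>,0,\<gamma>]) \<Longrightarrow>
       AE s in lborel. s \<in> {0..T_opt} \<longrightarrow> v s * \<phi> s = \<bar>\<phi> s\<bar>"
    using optimality_certificate[OF phi_continuous _ u_opt_admissible u_opt_steers abs_phi_integral tail]
      phi_pairing by blast+
  show "min_time T_opt (vector [0,0,0]) (vector [\<gamma>,0,\<gamma>])" by (rule certificate(1))
  assume v: "admissible v" "steers v T_opt (vector [0,0,0]) (vector [\<gamma>,0,\<gamma>])"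
    and j: "j \<in> {1..2*\<rho>+1}"
  show "AE t in lborel. sw_time \<rho> \<gamma> \<tau> (j-1) < t \<and> t < sw_time \<rho> \<gamma> \<tau> j \<longrightarrow> v t = (-1)^(j-1)"
    using certificate(2)[OF v]
  proof eventually_elim
    case (elim t)
    show ?case
    proof
      assume "sw_time \<rho> \<gamma> \<tau> (j-1) < t \<and> t < sw_time \<rho> \<gamma> \<tau> j"
      then have t: "0 < t \<and> t < T_opt \<and> u_opt t = (-1)^(j-1) \<and> \<phi> t \<noteq> 0"
        using on_switching_interval[OF j] by blast
      then have "v t * \<phi> t = u_opt t * \<phi> t" using elim u_opt_phi[of t] by simp
      then show "v t = (-1)^(j-1)" using t by simp
    qed
  qed
qed

lemma generic_case:
  "let T = (4*real \<rho>*(\<tau> + (real \<rho> - 1)*pi) - \<gamma>) / (2*real \<rho> - 1) in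
     (\<forall>j\<in>{1..2*\<rho>+1}. sw_len \<rho> \<gamma> \<tau> j > 0) \<and>
     (\<forall>k\<in>{1..\<rho>-1}. sw_len \<rho> \<gamma> \<tau> (2*k+1) = 2*pi - sw_len \<rho> \<gamma> \<tau> (2*k+2)) \<and>
     sw_time \<rho> \<gamma> \<tau> (2*\<rho>+1) = T \<and>
     min_time T (vector [0, 0, 0]) (vector [\<gamma>, 0, \<gamma>]) \<and>
     (\<exists>u. admissible u \<and> steers u T (vector [0, 0, 0]) (vector [\<gamma>, 0, \<gamma>]) \<and>
        (\<forall>j\<in>{1..2*\<rho>+1}. \<forall>t. sw_time \<rho> \<gamma> \<tau> (j-1) < t \<and> t < sw_time \<rho> \<gamma> \<tau> j
            \<longrightarrow> u t = (-1) ^ (j-1))) \<and>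
     (\<forall>v. admissible v \<and> steers v T (vector [0, 0, 0]) (vector [\<gamma>, 0, \<gamma>]) \<longrightarrow>
        (\<forall>j\<in>{1..2*\<rho>+1}. AE t in lborel.
            sw_time \<rho> \<gamma> \<tau> (j-1) < t \<and> t < sw_time \<rho> \<gamma> \<tau> j \<longrightarrow> v t = (-1) ^ (j-1)))"
  unfolding Let_def T_opt_eq[symmetric]
proof (intro conjI ballI allI impI exI[of _ u_opt])
  show "sw_len \<rho> \<gamma> \<tau> j > 0" for j using beta_bounds tau_pos by (simp add: sw_len_eq)
  show "sw_len \<rho> \<gamma> \<tau> (2*k+1) = 2*pi - sw_len \<rho> \<gamma> \<tau> (2*k+2)" if "k \<in> {1..\<rho>-1}" for k
    using that by (auto simp: sw_len_eq)
  show "u_opt t = (-1) ^ (j-1)" if "j \<in> {1..2*\<rho>+1}"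
    "sw_time \<rho> \<gamma> \<tau> (j-1) < t \<and> t < sw_time \<rho> \<gamma> \<tau> j" for j t
    using on_switching_interval that by blast
qed (use sw_time_last time_optimal u_opt_admissible u_opt_steers in auto)

end

section \<open>The resonant case \<open>\<gamma> = 2\<rho>\<pi>\<close>\<close>

text \<open>Here the certificate is the constant \<open>\<phi> = 1\<close>: every steering control has \<open>\<integral>v = \<gamma>\<close>,
  and \<open>u = 1\<close> reaches the target exactly at time \<open>\<gamma>\<close>.\<close>
lemma resonant_case:
  fixes \<gamma> :: real
  assumes \<gamma>: "\<gamma> = 2*real \<rho>*pi"
  shows "min_time (2*real \<rho>*pi) (vector [0, 0, 0]) (vector [\<gamma>, 0, \<gamma>]) \<and>
       admissible (\<lambda>t. 1) \<and>
       steers (\<lambda>t. 1) (2*real \<rho>*pi) (vector [0, 0, 0]) (vector [\<gamma>, 0, \<gamma>]) \<and>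
       (\<forall>v. admissible v \<and> steers v (2*real \<rho>*pi) (vector [0, 0, 0]) (vector [\<gamma>, 0, \<gamma>]) \<longrightarrow>
          (AE t in lborel. 0 < t \<and> t < 2*real \<rho>*pi \<longrightarrow> v t = 1))"
proof -
  have adm: "admissible (\<lambda>t. 1)" by (simp add: admissible_def)
  have T0: "0 \<le> 2*real \<rho>*pi" by simp
  have "integral {0..2*real \<rho>*pi} (\<lambda>s. 1) = \<gamma>"
    using integral_by_primitive[OF T0, of "\<lambda>x. x" "\<lambda>_. 1"] \<gamma> by simp
  moreover have "integral {0..2*real \<rho>*pi} (\<lambda>s. 1 * cos s) = 0"
    using integral_by_primitive[OF T0 DERIV_sin] by simp
  moreover have "integral {0..2*real \<rho>*pi} (\<lambda>s. 1 * sin s) = 0"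
    using integral_by_primitive[OF T0, of "\<lambda>x. - cos x" sin] by (simp add: derivative_eq_intros)
  ultimately have st: "steers (\<lambda>t. 1) (2*real \<rho>*pi) (vector [0, 0, 0]) (vector [\<gamma>, 0, \<gamma>])"
    using steers_iff_moments[OF adm] T0 by simp
  have pairing: "integral {0..T} (\<lambda>s. v s * 1) = \<gamma>"
    if "admissible v" "steers v T (vector [0, 0, 0]) (vector [\<gamma>, 0, \<gamma>])" for v T
    using steers_iff_moments[OF that(1)] that(2) by simp
  moreover have "integral {0..2*real \<rho>*pi} (\<lambda>s. \<bar>1::real\<bar>) = \<gamma>"
    using integral_by_primitive[OF T0, of "\<lambda>x. x" "\<lambda>_. 1"] \<gamma> by simp
  moreover have "\<exists>p. T < p \<and> p < 2*real \<rho>*pi \<and> (1::real) \<noteq> 0" if "T < 2*real \<rho>*pi" for T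
    using dense[OF that] by auto
  ultimately have certificate:
    "min_time (2*real \<rho>*pi) (vector [0, 0, 0]) (vector [\<gamma>, 0, \<gamma>])"
    "\<And>v. admissible v \<Longrightarrow> steers v (2*real \<rho>*pi) (vector [0, 0, 0]) (vector [\<gamma>, 0, \<gamma>]) \<Longrightarrow>
       AE s in lborel. s \<in> {0..2*real \<rho>*pi} \<longrightarrow> v s * 1 = \<bar>1\<bar>"
    using optimality_certificate[where \<phi>="\<lambda>_. 1", OF continuous_on_const _ adm st] by blast+
  have "AE t in lborel. 0 < t \<and> t < 2*real \<rho>*pi \<longrightarrow> v t = 1"
    if "admissible v" "steers v (2*real \<rho>*pi) (vector [0, 0, 0]) (vector [\<gamma>, 0, \<gamma>])" for v
    using certificate(2)[OF that] by eventually_elim auto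
  then show ?thesis using certificate(1) adm st by blast
qed

theorem theorem4:
  fixes \<gamma> :: real
  assumes "\<gamma> > 0"
  shows
   "(\<forall>\<rho>::nat. \<rho> \<ge> 1 \<and> 2*(real \<rho> - 1)*pi < \<gamma> \<and> \<gamma> < 2*real \<rho>*pi \<longrightarrow>
      (\<exists>!\<tau>. 0 < \<tau> \<and> \<tau> < pi \<and>
          (2*\<tau> + 2*(real \<rho> - 1)*pi - \<gamma>) / (2*real \<rho> - 1) = 2 * arctan (sin \<tau> / (2*real \<rho> - cos \<tau>))) \<and>
      (\<forall>\<tau>. 0 < \<tau> \<and> \<tau> < pi \<and>
          (2*\<tau> + 2*(real \<rho> - 1)*pi - \<gamma>) / (2*real \<rho> - 1) = 2 * arctan (sin \<tau> / (2*real \<rho> - cos \<tau>)) \<longrightarrow>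
         (let T = (4*real \<rho>*(\<tau> + (real \<rho> - 1)*pi) - \<gamma>) / (2*real \<rho> - 1) in
           (\<forall>j\<in>{1..2*\<rho>+1}. sw_len \<rho> \<gamma> \<tau> j > 0) \<and>
           (\<forall>k\<in>{1..\<rho>-1}. sw_len \<rho> \<gamma> \<tau> (2*k+1) = 2*pi - sw_len \<rho> \<gamma> \<tau> (2*k+2)) \<and>
           sw_time \<rho> \<gamma> \<tau> (2*\<rho>+1) = T \<and>
           min_time T (vector [0, 0, 0]) (vector [\<gamma>, 0, \<gamma>]) \<and>
           (\<exists>u. admissible u \<and> steers u T (vector [0, 0, 0]) (vector [\<gamma>, 0, \<gamma>]) \<and>
              (\<forall>j\<in>{1..2*\<rho>+1}. \<forall>t. sw_time \<rho> \<gamma> \<tau> (j-1) < t \<and> t < sw_time \<rho> \<gamma> \<tau> j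
                  \<longrightarrow> u t = (-1) ^ (j-1))) \<and>
           (\<forall>v. admissible v \<and> steers v T (vector [0, 0, 0]) (vector [\<gamma>, 0, \<gamma>]) \<longrightarrow>
              (\<forall>j\<in>{1..2*\<rho>+1}. AE t in lborel.
                  sw_time \<rho> \<gamma> \<tau> (j-1) < t \<and> t < sw_time \<rho> \<gamma> \<tau> j \<longrightarrow> v t = (-1) ^ (j-1))))))
    \<and>
    (\<forall>\<rho>::nat. \<rho> \<ge> 1 \<and> \<gamma> = 2*real \<rho>*pi \<longrightarrow>
       min_time (2*real \<rho>*pi) (vector [0, 0, 0]) (vector [\<gamma>, 0, \<gamma>]) \<and>
       admissible (\<lambda>t. 1) \<and>
       steers (\<lambda>t. 1) (2*real \<rho>*pi) (vector [0, 0, 0]) (vector [\<gamma>, 0, \<gamma>]) \<and>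
       (\<forall>v. admissible v \<and> steers v (2*real \<rho>*pi) (vector [0, 0, 0]) (vector [\<gamma>, 0, \<gamma>]) \<longrightarrow>
          (AE t in lborel. 0 < t \<and> t < 2*real \<rho>*pi \<longrightarrow> v t = 1)))"
  apply (intro conjI allI impI)
  subgoal using tau_exists_unique by blast
  subgoal for \<rho> \<tau> using switching_solution.generic_case[of \<rho> \<gamma> \<tau>] unfolding switching_solution_def by blast
  apply (use resonant_case in blast)+
  done

end
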